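(* Let $S$ be a set and let $f:2^S\to 2^S$ be monotonic with respect to $\subseteq$. Then $\nu f=\bigcup\{X\in 2^S\mid X \text{ is supported for } f\}$.
   Context: $\nu f$ denotes the greatest fixpoint of $f$ in the complete lattice $(2^S,\subseteq)$. For a binary relation ${\prec}$ on $X$ and $x\in X$, $\prec^{-1}(x)=\{x'\in X\mid x'\prec x\}$. A pair $(X,\prec)$ is a support ordering for $f$ if $X\subseteq S$, ${\prec}\subseteq X\times X$, and $x\in f(\prec^{-1}(x))$ for every $x\in X$. A set $X\subseteq S$ is supported for $f$ if there is some ${\prec}\subseteq X\times X$ such that $(X,\prec)$ is a support ordering for $f$. *)

theory Defs
  imports Main
begin

(* The ground set S is the universe of the type 'a, so 2^S is 'a set and
   \<nu> f is the library greatest fixpoint gfp f. *)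

definition pred_set :: "('a \<Rightarrow> 'a \<Rightarrow> bool) \<Rightarrow> 'a \<Rightarrow> 'a set" where
  "pred_set prec x = {x'. prec x' x}"

definition support_ordering :: "('a set \<Rightarrow> 'a set) \<Rightarrow> 'a set \<Rightarrow> ('a \<Rightarrow> 'a \<Rightarrow> bool) \<Rightarrow> bool" where
  "support_ordering f X prec \<longleftrightarrow>
     (\<forall>x y. prec x y \<longrightarrow> x \<in> X \<and> y \<in> X) \<and> (\<forall>x\<in>X. x \<in> f (pred_set prec x))"

definition supported :: "('a set \<Rightarrow> 'a set) \<Rightarrow> 'a set \<Rightarrow> bool" where
  "supported f X \<longleftrightarrow> (\<exists>prec. support_ordering f X prec)"

end

theory Submission
  imports Defs
begin

(* For monotone f the supported sets are exactly the post-fixpoints X \<subseteq> f X,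
   so the claim is the Knaster-Tarski description of gfp f as the union of all
   post-fixpoints. A post-fixpoint is supported by the total relation on X; conversely
   the predecessors of any x \<in> X lie in X, so monotonicity gives x \<in> f X. *)

lemma supported_if_subset:
  assumes "X \<subseteq> f X"
  shows "supported f X"
proof -
  let ?prec = "\<lambda>x y. x \<in> X \<and> y \<in> X"
  have "pred_set ?prec x = X" if "x \<in> X" for x
    using that unfolding pred_set_def by auto
  then have "support_ordering f X ?prec"
    using assms unfolding support_ordering_def by (simp add: subset_eq)
  then show ?thesis
    unfolding supported_def by blast
qed

lemma subset_if_supported:
  assumes "mono f" and "supported f X"
  shows "X \<subseteq> f X"
proof
  fix x assume "x \<in> X"
  obtain prec where prec: "support_ordering f X prec"
    using assms(2) unfolding supported_def by blast
  then have "pred_set prec x \<subseteq> X"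
    unfolding support_ordering_def pred_set_def by blast
  then have "f (pred_set prec x) \<subseteq> f X"
    by (rule monoD[OF assms(1)])
  moreover have "x \<in> f (pred_set prec x)"
    using prec \<open>x \<in> X\<close> unfolding support_ordering_def by blast
  ultimately show "x \<in> f X" by blast
qed

lemma supported_iff_subset:
  assumes "mono f"
  shows "supported f X \<longleftrightarrow> X \<subseteq> f X"
  by (rule iffI, erule subset_if_supported[OF assms], erule supported_if_subset)

theorem corollary2:
  fixes f :: "'a set \<Rightarrow> 'a set"
  assumes "mono f"
  shows "gfp f = \<Union> {X. supported f X}"
  unfolding gfp_def supported_iff_subset[OF assms] by (rule refl)

end
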